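(* The Uniform Price Auction is incentive compatible (with public budgets), never charges an agent more than its budget, and for every input its allocation $x$ satisfies $\bar W(x)\ge\frac12\bar W^*$.
   Context: Uniform Price Auction: one unit of a divisible good, $n$ agents with values per unit $v_i>0$ and publicly known budgets $B_i>0$. Relabel agents so that $v_1\ge\dots\ge v_n$ and set $v_{n+1}=0$. Let $k\in\{0,\dots,n\}$ be the largest integer with $\sum_{j=1}^kB_j\le v_k$ (the empty sum is $0$, and $k=0$ is always admissible). Case I: if $\sum_{j=1}^kB_j>v_{k+1}$, allocate $x_i=B_i/\sum_{j=1}^kB_j$ for $i\le k$ and $0$ to everyone else. Case II: if $\sum_{j=1}^kB_j\le v_{k+1}$, allocate $x_i=B_i/v_{k+1}$ for $i\le k$, $x_{k+1}=1-\sum_{j=1}^kx_j$, and $0$ to everyone else. Payments are given by Myerson's formula $\pi_i(v)=v_ix_i(v)-\int_0^{v_i}x_i(u,v_{-i})\,du$. Agent utility is $v_ix_i-\pi_i$ if $\pi_i\le B_i$ and $-\infty$ otherwise; incentive compatibility means truthfully reporting the value maximizes utility for all reports of others. Liquid welfare: $\bar W(x)=\sum_i\min\{v_ix_i,B_i\}$; $\bar W^*=\max\{\bar W(x):x\in\mathbb R^n_{\ge0},\sum_ix_i=1\}$. *)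

theory Defs
  imports "HOL-Analysis.Analysis"
begin

text \<open>Agents are 0,...,n-1. Values v and budgets B are functions nat => real
(only the entries below n matter). The relabelling v_1 >= ... >= v_n is the
stable sort of the agents by decreasing value, ties broken by agent index.\<close>

definition upa_order :: "nat \<Rightarrow> (nat \<Rightarrow> real) \<Rightarrow> nat list" where
  "upa_order n v = sort_key (\<lambda>i. - v i) [0..<n]"

text \<open>Sorted value of the agent at (1-based) position j; 0 for j = n+1 (and beyond).\<close>
definition upa_sv :: "nat \<Rightarrow> (nat \<Rightarrow> real) \<Rightarrow> nat \<Rightarrow> real" where
  "upa_sv n v j = (if 1 \<le> j \<and> j \<le> n then v (upa_order n v ! (j - 1)) else 0)"

definition upa_sB :: "nat \<Rightarrow> (nat \<Rightarrow> real) \<Rightarrow> (nat \<Rightarrow> real) \<Rightarrow> nat \<Rightarrow> real" where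
  "upa_sB n B v j = B (upa_order n v ! (j - 1))"

definition upa_S :: "nat \<Rightarrow> (nat \<Rightarrow> real) \<Rightarrow> (nat \<Rightarrow> real) \<Rightarrow> nat \<Rightarrow> real" where
  "upa_S n B v k = (\<Sum>j=1..k. upa_sB n B v j)"

definition upa_k :: "nat \<Rightarrow> (nat \<Rightarrow> real) \<Rightarrow> (nat \<Rightarrow> real) \<Rightarrow> nat" where
  "upa_k n B v = (GREATEST k. k \<le> n \<and> (k = 0 \<or> upa_S n B v k \<le> upa_sv n v k))"

definition upa_posalloc :: "nat \<Rightarrow> (nat \<Rightarrow> real) \<Rightarrow> (nat \<Rightarrow> real) \<Rightarrow> nat \<Rightarrow> real" where
  "upa_posalloc n B v j =
     (let k = upa_k n B v; S = upa_S n B v k in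
      if S > upa_sv n v (k + 1) then
        (if 1 \<le> j \<and> j \<le> k then upa_sB n B v j / S else 0)
      else
        (if 1 \<le> j \<and> j \<le> k then upa_sB n B v j / upa_sv n v (k + 1)
         else if j = k + 1 then 1 - (\<Sum>l=1..k. upa_sB n B v l / upa_sv n v (k + 1))
         else 0))"

definition upa_alloc :: "nat \<Rightarrow> (nat \<Rightarrow> real) \<Rightarrow> (nat \<Rightarrow> real) \<Rightarrow> nat \<Rightarrow> real" where
  "upa_alloc n B v i =
     (\<Sum>j=1..n. if upa_order n v ! (j - 1) = i then upa_posalloc n B v j else 0)"

definition upa_pay :: "nat \<Rightarrow> (nat \<Rightarrow> real) \<Rightarrow> (nat \<Rightarrow> real) \<Rightarrow> nat \<Rightarrow> real" where
  "upa_pay n B v i = v i * upa_alloc n B v i - integral {0..v i} (\<lambda>u. upa_alloc n B (v(i := u)) i)"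

definition upa_util :: "nat \<Rightarrow> (nat \<Rightarrow> real) \<Rightarrow> (nat \<Rightarrow> real) \<Rightarrow> (nat \<Rightarrow> real) \<Rightarrow> nat \<Rightarrow> ereal" where
  "upa_util n B v w i =
     (if upa_pay n B w i \<le> B i then ereal (v i * upa_alloc n B w i - upa_pay n B w i) else -\<infinity>)"

definition valid_profile :: "nat \<Rightarrow> (nat \<Rightarrow> real) \<Rightarrow> bool" where
  "valid_profile n v \<longleftrightarrow> (\<forall>i<n. v i > 0)"

definition liquid_welfare :: "nat \<Rightarrow> (nat \<Rightarrow> real) \<Rightarrow> (nat \<Rightarrow> real) \<Rightarrow> (nat \<Rightarrow> real) \<Rightarrow> real" where
  "liquid_welfare n B v x = (\<Sum>i<n. min (v i * x i) (B i))"

definition opt_liquid_welfare :: "nat \<Rightarrow> (nat \<Rightarrow> real) \<Rightarrow> (nat \<Rightarrow> real) \<Rightarrow> real" where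
  "opt_liquid_welfare n B v =
     Sup {liquid_welfare n B v x | x. (\<forall>i<n. x i \<ge> 0) \<and> (\<Sum>i<n. x i) = 1}"

end

theory Submission
  imports Defs
begin

text \<open>The auction sells at the uniform price \<open>p = max S\<^sub>k v\<^sub>k\<^sub>+\<^sub>1\<close> and its allocation is a
  clearing allocation at \<open>p\<close>: agents bidding above \<open>p\<close> spend their whole budget, agents below
  get nothing, agents at \<open>p\<close> spend at most their budget, and the good is sold out. Comparing the
  budgets demanded at two clearing prices shows that an agent bidding above the price cannot move
  it, and that its allocation is monotone in its own bid. Myerson's payment rule then makes
  truthful reporting optimal, and as the allocation is constant \<open>B\<^sub>i / p\<close> above \<open>p\<close>, the
  payment is at most \<open>p \<cdot> B\<^sub>i / p = B\<^sub>i\<close>. For welfare, a clearing allocation at \<open>p\<close> has liquid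
  welfare at least \<open>p\<close> and also at least the total budget \<open>L\<close> of the agents valuing the good above
  \<open>p\<close>, whereas every allocation has liquid welfare at most \<open>L + p\<close>.\<close>

lemma length_upa_order [simp]: "length (upa_order n v) = n"
  and set_upa_order [simp]: "set (upa_order n v) = {0..<n}"
  and distinct_upa_order: "distinct (upa_order n v)"
  unfolding upa_order_def by simp_all

lemma upa_order_nth_less: "a < n \<Longrightarrow> upa_order n v ! a < n"
  using nth_mem[of a "upa_order n v"] by simp

lemma upa_order_sorted:
  assumes "a \<le> b" "b < n"
  shows "v (upa_order n v ! b) \<le> v (upa_order n v ! a)"
proof -
  have "sorted (map (\<lambda>i. - v i) (upa_order n v))"
    unfolding upa_order_def by (rule sorted_sort_key)
  then have "map (\<lambda>i. - v i) (upa_order n v) ! a \<le> map (\<lambda>i. - v i) (upa_order n v) ! b"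
    using assms by (intro sorted_nth_mono) auto
  then show ?thesis using assms by simp
qed

lemma bij_betw_upa_position: "bij_betw (\<lambda>j. upa_order n v ! (j - 1)) {1..n} {0..<n}"
proof -
  have "bij_betw ((!) (upa_order n v)) {..<n} {0..<n}"
    using bij_betw_nth[of "upa_order n v" "{..<n}" "{0..<n}"] distinct_upa_order by simp
  moreover have "bij_betw (\<lambda>j. j - 1) {1..n} {..<n}"
    by (rule bij_betwI[where g = Suc]) auto
  ultimately show ?thesis
    using bij_betw_trans[of "\<lambda>j. j - 1" "{1..n}" "{..<n}"] by (simp add: comp_def)
qed

lemma sum_upa_positions: "(\<Sum>i<n. h i) = (\<Sum>j=1..n. h (upa_order n v ! (j - 1)))"
  using sum.reindex_bij_betw[OF bij_betw_upa_position[of n v], of h] by (simp add: atLeast0LessThan)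

lemma upa_position_exists: "i < n \<Longrightarrow> \<exists>j. 1 \<le> j \<and> j \<le> n \<and> upa_order n v ! (j - 1) = i"
proof -
  assume "i < n"
  then have "i \<in> (\<lambda>j. upa_order n v ! (j - 1)) ` {1..n}"
    using bij_betw_imp_surj_on[OF bij_betw_upa_position[of n v]] by simp
  then show ?thesis by auto
qed

lemma upa_alloc_position:
  assumes "1 \<le> j0" "j0 \<le> n"
  shows "upa_alloc n B v (upa_order n v ! (j0 - 1)) = upa_posalloc n B v j0"
proof -
  have "inj_on (\<lambda>j. upa_order n v ! (j - 1)) {1..n}"
    using bij_betw_upa_position bij_betw_def by blast
  then have "j \<in> {1..n} \<Longrightarrow> upa_order n v ! (j - 1) = upa_order n v ! (j0 - 1) \<longleftrightarrow> j = j0" for j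
    using assms inj_onD[of _ "{1..n}" _ j0] by fastforce
  then have "upa_alloc n B v (upa_order n v ! (j0 - 1)) =
      (\<Sum>j=1..n. if j = j0 then upa_posalloc n B v j else 0)"
    unfolding upa_alloc_def by (intro sum.cong) auto
  then show ?thesis using assms by simp
qed

lemma upa_sv_nonneg: "\<forall>j<n. v j \<ge> 0 \<Longrightarrow> upa_sv n v j \<ge> 0"
  unfolding upa_sv_def using upa_order_nth_less by auto

lemma upa_sv_antimono:
  assumes "\<forall>j<n. v j \<ge> 0" "1 \<le> a" "a \<le> b"
  shows "upa_sv n v b \<le> upa_sv n v a"
proof (cases "b \<le> n")
  case True
  then show ?thesis
    unfolding upa_sv_def using assms upa_order_sorted[of "a - 1" "b - 1" n v] by auto
next
  case False
  then show ?thesis using upa_sv_nonneg[OF assms(1)] by (simp add: upa_sv_def)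
qed

lemma upa_sB_pos: "\<forall>j<n. B j > 0 \<Longrightarrow> 1 \<le> j \<Longrightarrow> j \<le> n \<Longrightarrow> upa_sB n B v j > 0"
  unfolding upa_sB_def using upa_order_nth_less[of "j - 1" n v] by auto

lemma upa_S_Suc: "upa_S n B v (Suc m) = upa_S n B v m + upa_sB n B v (Suc m)"
  unfolding upa_S_def by simp

lemma upa_S_mono:
  assumes "\<forall>j<n. B j > 0" "a \<le> b" "b \<le> n"
  shows "upa_S n B v a \<le> upa_S n B v b"
  unfolding upa_S_def using assms upa_sB_pos[OF assms(1)]
  by (intro sum_mono2) (auto intro: less_imp_le)

lemma upa_S_pos:
  assumes "\<forall>j<n. B j > 0" "1 \<le> a" "a \<le> n"
  shows "upa_S n B v a > 0"
  unfolding upa_S_def using assms upa_sB_pos[OF assms(1)]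
  by (intro sum_pos) auto

lemma upa_k_admissible:
  "upa_k n B v \<le> n \<and> (upa_k n B v = 0 \<or> upa_S n B v (upa_k n B v) \<le> upa_sv n v (upa_k n B v))"
  unfolding upa_k_def by (rule GreatestI_nat[of _ 0 n]) auto

lemma upa_S_gt_sv_beyond_k:
  assumes "upa_k n B v < m" "m \<le> n"
  shows "upa_S n B v m > upa_sv n v m"
proof (rule ccontr)
  assume "\<not> ?thesis"
  then have "m \<le> upa_k n B v"
    unfolding upa_k_def using assms by (intro Greatest_le_nat[of _ m n]) auto
  then show False using assms(1) by simp
qed

section \<open>The clearing price of the auction\<close>

text \<open>In both cases I and II agents \<open>1..k\<close> pay the uniform price \<open>p\<close> per unit, i.e. receive
  \<open>B\<^sub>j / p\<close>, and agent \<open>k + 1\<close> receives the rest.\<close>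

definition upa_price :: "nat \<Rightarrow> (nat \<Rightarrow> real) \<Rightarrow> (nat \<Rightarrow> real) \<Rightarrow> real" where
  "upa_price n B v = max (upa_S n B v (upa_k n B v)) (upa_sv n v (upa_k n B v + 1))"

context
  fixes n :: nat and B v :: "nat \<Rightarrow> real"
  assumes B_pos: "\<forall>j<n. B j > 0" and v_nonneg: "\<forall>j<n. v j \<ge> 0" and v_pos: "\<exists>j<n. v j > 0"
begin

abbreviation (input) k where "k \<equiv> upa_k n B v"
abbreviation (input) p where "p \<equiv> upa_price n B v"

lemma upa_price_pos: "p > 0"
proof (cases "k = 0")
  case True
  obtain i j where "i < n" "v i > 0" "1 \<le> j" "j \<le> n" "upa_order n v ! (j - 1) = i"
    using v_pos upa_position_exists by blast
  then have "upa_sv n v j > 0" by (simp add: upa_sv_def)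
  then have "upa_sv n v 1 > 0"
    using upa_sv_antimono[OF v_nonneg, of 1 j] \<open>1 \<le> j\<close> by simp
  then show ?thesis using True by (simp add: upa_price_def)
next
  case False
  then have "upa_S n B v k > 0" using upa_S_pos[OF B_pos] upa_k_admissible[of n B v] by simp
  then show ?thesis by (simp add: upa_price_def)
qed

lemma upa_price_ge_S: "upa_S n B v k \<le> p"
  unfolding upa_price_def by simp

lemma upa_price_le_sv: "1 \<le> j \<Longrightarrow> j \<le> k \<Longrightarrow> p \<le> upa_sv n v j"
  using upa_k_admissible[of n B v] upa_sv_antimono[OF v_nonneg, of j k] upa_sv_antimono[OF v_nonneg, of j "k + 1"]
  unfolding upa_price_def by auto

lemma upa_sv_le_price: "k < j \<Longrightarrow> upa_sv n v j \<le> p"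
  using upa_sv_antimono[OF v_nonneg, of "k + 1" j] unfolding upa_price_def by simp

lemma upa_posalloc_price:
  "upa_posalloc n B v j =
    (if 1 \<le> j \<and> j \<le> k then upa_sB n B v j / p
     else if j = k + 1 then 1 - upa_S n B v k / p else 0)"
proof (cases "upa_S n B v k > upa_sv n v (k + 1)")
  case True
  moreover have "upa_S n B v k > 0" using True upa_sv_nonneg[OF v_nonneg, of "k + 1"] by simp
  ultimately show ?thesis unfolding upa_posalloc_def upa_price_def Let_def by auto
next
  case False
  have "(\<Sum>l=1..k. upa_sB n B v l / upa_sv n v (k + 1)) = upa_S n B v k / upa_sv n v (k + 1)"
    unfolding upa_S_def by (simp add: sum_divide_distrib)
  with False show ?thesis unfolding upa_posalloc_def upa_price_def Let_def by auto
qed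

lemma upa_posalloc_nonneg: "1 \<le> j \<Longrightarrow> j \<le> n \<Longrightarrow> upa_posalloc n B v j \<ge> 0"
  using upa_price_pos upa_price_ge_S upa_sB_pos[OF B_pos, of j v] by (auto simp: upa_posalloc_price)

lemma upa_posalloc_above_price:
  "1 \<le> j \<Longrightarrow> j \<le> n \<Longrightarrow> upa_sv n v j > p \<Longrightarrow> upa_posalloc n B v j = upa_sB n B v j / p"
  using upa_sv_le_price[of j] by (cases "j \<le> k") (auto simp: upa_posalloc_price)

lemma upa_posalloc_below_price:
  assumes "1 \<le> j" "upa_sv n v j < p"
  shows "upa_posalloc n B v j = 0"
proof -
  have "\<not> j \<le> k" using upa_price_le_sv[of j] assms by auto
  moreover have "j = k + 1 \<Longrightarrow> p = upa_S n B v k"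
    using assms unfolding upa_price_def by (auto simp: max_def split: if_splits)
  ultimately show ?thesis using upa_price_pos by (auto simp: upa_posalloc_price)
qed

lemma upa_posalloc_at_price:
  assumes "1 \<le> j" "j \<le> n" "upa_sv n v j = p"
  shows "upa_posalloc n B v j \<le> upa_sB n B v j / p"
proof (cases "j = k + 1")
  case True
  text \<open>Agent \<open>k + 1\<close> is not admissible, so its budget covers the rest of the good.\<close>
  have "upa_sv n v (k + 1) < upa_S n B v (k + 1)"
    using upa_S_gt_sv_beyond_k[of n B v "k + 1"] True assms by simp
  then have "p - upa_S n B v k \<le> upa_sB n B v (k + 1)"
    using upa_S_mono[OF B_pos, of k "k + 1" v] True assms
    unfolding upa_price_def by (simp add: upa_S_Suc)
  then have "(p - upa_S n B v k) / p \<le> upa_sB n B v (k + 1) / p"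
    using upa_price_pos by (simp add: divide_right_mono)
  then show ?thesis using True upa_price_pos by (simp add: upa_posalloc_price diff_divide_distrib)
next
  case False
  then show ?thesis
    using upa_price_pos upa_sB_pos[OF B_pos, of j v] assms by (auto simp: upa_posalloc_price)
qed

lemma upa_posalloc_sum:
  assumes "n \<ge> 1"
  shows "(\<Sum>j=1..n. upa_posalloc n B v j) = 1"
proof -
  have k_le: "k \<le> n" using upa_k_admissible[of n B v] by simp
  have "(\<Sum>j=1..n. upa_posalloc n B v j) =
        (\<Sum>j=1..n. if j \<le> k then upa_sB n B v j / p else 0) +
        (\<Sum>j=1..n. if j = k + 1 then 1 - upa_S n B v k / p else 0)"
    unfolding sum.distrib[symmetric] by (rule sum.cong) (auto simp: upa_posalloc_price)
  also have "(\<Sum>j=1..n. if j \<le> k then upa_sB n B v j / p else 0) = (\<Sum>j=1..k. upa_sB n B v j / p)"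
    using k_le by (intro sum.mono_neutral_cong_right) auto
  also have "(\<Sum>j=1..k. upa_sB n B v j / p) = upa_S n B v k / p"
    unfolding upa_S_def by (simp add: sum_divide_distrib)
  also have "(\<Sum>j=1..n. if j = k + 1 then 1 - upa_S n B v k / p else 0) =
      (if k < n then 1 - upa_S n B v k / p else 0)"
    by (simp add: sum.delta')
  finally have "(\<Sum>j=1..n. upa_posalloc n B v j) =
      upa_S n B v k / p + (if k < n then 1 - upa_S n B v k / p else 0)" .
  moreover have "p = upa_S n B v k" if "\<not> k < n"
  proof -
    text \<open>All agents are admissible: then \<open>v\<^sub>n\<^sub>+\<^sub>1 = 0\<close> and the price is \<open>S\<^sub>n\<close>.\<close>
    have "k = n" using that k_le by simp
    then show ?thesis
      using upa_S_pos[OF B_pos, of n v] assms unfolding upa_price_def by (simp add: upa_sv_def)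
  qed
  ultimately show ?thesis using upa_price_pos by (cases "k < n") auto
qed

end

section \<open>Clearing allocations\<close>

definition clearing_alloc :: "nat \<Rightarrow> (nat \<Rightarrow> real) \<Rightarrow> (nat \<Rightarrow> real) \<Rightarrow> (nat \<Rightarrow> real) \<Rightarrow> real \<Rightarrow> bool" where
  "clearing_alloc n B w x q \<longleftrightarrow> q > 0 \<and> (\<forall>j<n. x j \<ge> 0) \<and> (\<Sum>j<n. x j) = 1 \<and>
     (\<forall>j<n. w j > q \<longrightarrow> x j = B j / q) \<and> (\<forall>j<n. w j < q \<longrightarrow> x j = 0) \<and>
     (\<forall>j<n. w j = q \<longrightarrow> x j \<le> B j / q)"

lemma upa_alloc_clearing:
  assumes n: "n \<ge> 1" and B_pos: "\<forall>j<n. B j > 0"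
    and v_nonneg: "\<forall>j<n. v j \<ge> 0" and v_pos: "\<exists>j<n. v j > 0"
  shows "clearing_alloc n B v (upa_alloc n B v) (upa_price n B v)"
proof -
  have position: "\<exists>j. 1 \<le> j \<and> j \<le> n \<and> upa_alloc n B v i = upa_posalloc n B v j \<and>
      v i = upa_sv n v j \<and> B i = upa_sB n B v j" if i: "i < n" for i
  proof -
    obtain j where "1 \<le> j" "j \<le> n" "upa_order n v ! (j - 1) = i"
      using upa_position_exists[OF i] by blast
    then show ?thesis using upa_alloc_position[of j n B v]
      by (intro exI[of _ j]) (auto simp: upa_sv_def upa_sB_def)
  qed
  have "(\<Sum>j<n. upa_alloc n B v j) = (\<Sum>j=1..n. upa_alloc n B v (upa_order n v ! (j - 1)))"
    by (rule sum_upa_positions)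
  also have "\<dots> = (\<Sum>j=1..n. upa_posalloc n B v j)"
    using upa_alloc_position by (intro sum.cong) auto
  also have "\<dots> = 1"
    using upa_posalloc_sum[OF B_pos v_nonneg v_pos n] .
  finally have sum: "(\<Sum>j<n. upa_alloc n B v j) = 1" .
  show ?thesis unfolding clearing_alloc_def
  proof (intro conjI allI impI sum)
    show "upa_price n B v > 0" by (rule upa_price_pos[OF B_pos v_nonneg v_pos])
  next
    fix i assume "i < n"
    then obtain j where j: "1 \<le> j" "j \<le> n" "upa_alloc n B v i = upa_posalloc n B v j"
      "v i = upa_sv n v j" "B i = upa_sB n B v j"
      using position by blast
    show "upa_alloc n B v i \<ge> 0"
      using upa_posalloc_nonneg[OF B_pos v_nonneg v_pos] j by simp
    show "upa_alloc n B v i = B i / upa_price n B v" if "v i > upa_price n B v"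
      using upa_posalloc_above_price[OF B_pos v_nonneg v_pos] j that by simp
    show "upa_alloc n B v i = 0" if "v i < upa_price n B v"
      using upa_posalloc_below_price[OF B_pos v_nonneg v_pos] j that by simp
    show "upa_alloc n B v i \<le> B i / upa_price n B v" if "v i = upa_price n B v"
      using upa_posalloc_at_price[OF B_pos v_nonneg v_pos] j that by simp
  qed
qed

definition others_budget_above :: "nat \<Rightarrow> (nat \<Rightarrow> real) \<Rightarrow> nat \<Rightarrow> (nat \<Rightarrow> real) \<Rightarrow> real \<Rightarrow> real" where
  "others_budget_above n B i w q = (\<Sum>j\<in>{..<n}-{i}. if w j > q then B j else 0)"

definition others_budget_atleast :: "nat \<Rightarrow> (nat \<Rightarrow> real) \<Rightarrow> nat \<Rightarrow> (nat \<Rightarrow> real) \<Rightarrow> real \<Rightarrow> real" where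
  "others_budget_atleast n B i w q = (\<Sum>j\<in>{..<n}-{i}. if w j \<ge> q then B j else 0)"

lemma others_budget_above_upd [simp]:
  "others_budget_above n B i (w(i := a)) q = others_budget_above n B i w q"
  unfolding others_budget_above_def by (rule sum.cong) auto

lemma others_budget_atleast_upd [simp]:
  "others_budget_atleast n B i (w(i := a)) q = others_budget_atleast n B i w q"
  unfolding others_budget_atleast_def by (rule sum.cong) auto

lemma others_budget_above_nonneg: "\<forall>j<n. B j > 0 \<Longrightarrow> others_budget_above n B i w q \<ge> 0"
  unfolding others_budget_above_def by (rule sum_nonneg) (auto simp: less_imp_le)

lemma others_budget_atleast_le_above:
  "\<forall>j<n. B j > 0 \<Longrightarrow> q1 < q2 \<Longrightarrow> others_budget_atleast n B i w q2 \<le> others_budget_above n B i w q1"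
  unfolding others_budget_above_def others_budget_atleast_def by (rule sum_mono) (auto simp: less_imp_le)

lemma clearing_alloc_le:
  assumes clear: "clearing_alloc n B w x q" and i: "i < n"
  shows "x i + others_budget_above n B i w q / q \<le> 1"
proof -
  have "others_budget_above n B i w q / q = (\<Sum>j\<in>{..<n}-{i}. if w j > q then B j / q else 0)"
    unfolding others_budget_above_def sum_divide_distrib by (rule sum.cong) auto
  also have "\<dots> \<le> (\<Sum>j\<in>{..<n}-{i}. x j)"
    using clear by (intro sum_mono) (auto simp: clearing_alloc_def)
  also have "x i + \<dots> = (\<Sum>j<n. x j)" using i by (simp add: sum.remove)
  finally show ?thesis using clear by (simp add: clearing_alloc_def)
qed

lemma clearing_alloc_ge:
  assumes clear: "clearing_alloc n B w x q" and i: "i < n"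
  shows "1 \<le> x i + others_budget_atleast n B i w q / q"
proof -
  have "(\<Sum>j<n. x j) = x i + (\<Sum>j\<in>{..<n}-{i}. x j)" using i by (simp add: sum.remove)
  also have "(\<Sum>j\<in>{..<n}-{i}. x j) \<le> (\<Sum>j\<in>{..<n}-{i}. if w j \<ge> q then B j / q else 0)"
  proof (intro sum_mono)
    fix j assume "j \<in> {..<n}-{i}"
    then show "x j \<le> (if w j \<ge> q then B j / q else 0)"
      using clear unfolding clearing_alloc_def by (cases "w j > q"; cases "w j = q") auto
  qed
  also have "\<dots> = others_budget_atleast n B i w q / q"
    unfolding others_budget_atleast_def sum_divide_distrib by (rule sum.cong) auto
  finally show ?thesis using clear by (simp add: clearing_alloc_def)
qed

lemma clearing_price_ge_demand:
  assumes clear: "clearing_alloc n B w x q" and i: "i < n"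
  shows "(if w i > q then B i else 0) + others_budget_above n B i w q \<le> q"
proof -
  have "q > 0" "x i \<ge> 0" "w i > q \<Longrightarrow> x i = B i / q"
    using clear i by (auto simp: clearing_alloc_def)
  then have "(if w i > q then B i else 0) / q \<le> x i" by auto
  then have "(if w i > q then B i else 0) / q + others_budget_above n B i w q / q \<le> 1"
    using clearing_alloc_le[OF clear i] by linarith
  then show ?thesis using \<open>q > 0\<close> by (simp add: add_divide_distrib[symmetric] divide_le_eq)
qed

lemma clearing_price_le_demand:
  assumes clear: "clearing_alloc n B w x q" and i: "i < n"
  shows "q \<le> (if w i \<ge> q then B i else 0) + others_budget_atleast n B i w q"
proof -
  have "q > 0" "w i < q \<Longrightarrow> x i = 0" "w i \<ge> q \<Longrightarrow> x i \<le> B i / q"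
    using clear i unfolding clearing_alloc_def by (auto simp: le_less)
  then have "x i \<le> (if w i \<ge> q then B i else 0) / q" by auto
  then have "1 \<le> (if w i \<ge> q then B i else 0) / q + others_budget_atleast n B i w q / q"
    using clearing_alloc_ge[OF clear i] by linarith
  then show ?thesis using \<open>q > 0\<close> by (simp add: add_divide_distrib[symmetric] le_divide_eq)
qed

lemma clearing_price_unique_above:
  assumes B_pos: "\<forall>j<n. B j > 0" and i: "i < n"
    and clear_a: "clearing_alloc n B (v(i := a)) xa qa"
    and clear_b: "clearing_alloc n B (v(i := b)) xb qb"
    and a: "a > qa" and b: "b > qa"
  shows "qb = qa" and "xb i = B i / qa"
proof -
  have "B i > 0" using B_pos i by simp
  have a_ge: "B i + others_budget_above n B i v qa \<le> qa"
    using clearing_price_ge_demand[OF clear_a i] a by simp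
  have a_le: "qa \<le> B i + others_budget_atleast n B i v qa"
    using clearing_price_le_demand[OF clear_a i] a by simp
  have b_ge: "(if b > qb then B i else 0) + others_budget_above n B i v qb \<le> qb"
    using clearing_price_ge_demand[OF clear_b i] by simp
  have b_le: "qb \<le> (if b \<ge> qb then B i else 0) + others_budget_atleast n B i v qb"
    using clearing_price_le_demand[OF clear_b i] by simp
  have "\<not> qb > qa"
  proof
    assume "qb > qa"
    then have "others_budget_atleast n B i v qb \<le> others_budget_above n B i v qa"
      by (rule others_budget_atleast_le_above[OF B_pos])
    then show False using a_ge b_le \<open>qb > qa\<close> \<open>B i > 0\<close> by (auto split: if_splits)
  qed
  moreover have "\<not> qb < qa"
  proof
    assume "qb < qa"
    then have "others_budget_atleast n B i v qa \<le> others_budget_above n B i v qb"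
      by (rule others_budget_atleast_le_above[OF B_pos])
    then show False using a_le b_ge b \<open>qb < qa\<close> by simp
  qed
  ultimately show "qb = qa" by simp
  then show "xb i = B i / qa" using clear_b b i by (simp add: clearing_alloc_def)
qed

lemma clearing_alloc_mono:
  assumes B_pos: "\<forall>j<n. B j > 0" and i: "i < n"
    and clear_a: "clearing_alloc n B (v(i := a)) xa q"
    and clear_b: "clearing_alloc n B (v(i := b)) xb q'"
    and "a < b"
  shows "xa i \<le> xb i"
proof -
  have "q > 0" "q' > 0" "xb i \<ge> 0" using clear_a clear_b i by (auto simp: clearing_alloc_def)
  consider "a < q" | "a > q" | "a = q" by linarith
  then show ?thesis
  proof cases
    case 1
    then show ?thesis using clear_a i \<open>xb i \<ge> 0\<close> by (simp add: clearing_alloc_def)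
  next
    case 2
    then show ?thesis
      using clearing_price_unique_above[OF B_pos i clear_a clear_b] clear_a i \<open>a < b\<close>
      by (simp add: clearing_alloc_def)
  next
    case 3
    have "\<not> q' < q"
    proof
      assume "q' < q"
      then have "others_budget_atleast n B i v q \<le> others_budget_above n B i v q'"
        by (rule others_budget_atleast_le_above[OF B_pos])
      then show False
        using clearing_price_le_demand[OF clear_a i] clearing_price_ge_demand[OF clear_b i]
          3 \<open>a < b\<close> \<open>q' < q\<close> by simp
    qed
    then consider "q' = q" | "q < q'" by linarith
    then show ?thesis
    proof cases
      case 1
      then show ?thesis using clear_a clear_b i 3 \<open>a < b\<close> by (simp add: clearing_alloc_def)
    next
      case 2
      text \<open>The others' demand above \<open>q\<close> bounds \<open>xa i\<close> from above and \<open>xb i\<close> from below.\<close>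
      let ?L = "others_budget_above n B i v q"
      have "?L / q' \<le> ?L / q"
        using 2 \<open>q > 0\<close> others_budget_above_nonneg[OF B_pos] by (intro divide_left_mono) auto
      moreover have "others_budget_atleast n B i v q' / q' \<le> ?L / q'"
        using others_budget_atleast_le_above[OF B_pos 2] \<open>q' > 0\<close> by (intro divide_right_mono) auto
      ultimately show ?thesis
        using clearing_alloc_le[OF clear_a i] clearing_alloc_ge[OF clear_b i] by simp
    qed
  qed
qed

section \<open>Liquid welfare of a clearing allocation\<close>

lemma clearing_alloc_spend_le:
  assumes "clearing_alloc n B w x q" "j < n" "B j > 0"
  shows "q * x j \<le> B j"
  using assms unfolding clearing_alloc_def
  by (cases "w j > q"; cases "w j < q") (auto simp: le_divide_eq mult.commute)

lemma liquid_welfare_clearing_ge_price: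
  assumes clear: "clearing_alloc n B v x q" and B_pos: "\<forall>j<n. B j > 0"
  shows "q \<le> liquid_welfare n B v x"
proof -
  have "q = (\<Sum>j<n. q * x j)"
    using clear by (simp add: clearing_alloc_def sum_distrib_left[symmetric])
  also have "\<dots> \<le> liquid_welfare n B v x"
    unfolding liquid_welfare_def
  proof (rule sum_mono)
    fix j assume "j \<in> {..<n}"
    then have j: "j < n" by simp
    have "q * x j \<le> v j * x j" if "v j \<ge> q"
      using clear j that by (intro mult_right_mono) (auto simp: clearing_alloc_def)
    moreover have "x j = 0" if "v j < q" using clear j that by (simp add: clearing_alloc_def)
    ultimately show "q * x j \<le> min (v j * x j) (B j)"
      using clearing_alloc_spend_le[OF clear j] B_pos j by (cases "v j < q") auto
  qed
  finally show ?thesis .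
qed

lemma liquid_welfare_clearing_ge_budget_above:
  assumes clear: "clearing_alloc n B v x q" and B_pos: "\<forall>j<n. B j > 0" and v_nonneg: "\<forall>j<n. v j \<ge> 0"
  shows "(\<Sum>j<n. if v j > q then B j else 0) \<le> liquid_welfare n B v x"
  unfolding liquid_welfare_def
proof (rule sum_mono)
  fix j assume "j \<in> {..<n}"
  then have j: "j < n" by simp
  have "x j \<ge> 0" "q > 0" using clear j by (auto simp: clearing_alloc_def)
  have "B j \<le> v j * x j" if "v j > q"
  proof -
    have "B j = q * x j" using clear j that \<open>q > 0\<close> by (simp add: clearing_alloc_def)
    also have "\<dots> \<le> v j * x j" using that \<open>x j \<ge> 0\<close> by (intro mult_right_mono) auto
    finally show ?thesis .
  qed
  then show "(if v j > q then B j else 0) \<le> min (v j * x j) (B j)"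
    using \<open>x j \<ge> 0\<close> v_nonneg B_pos j by (auto simp: less_imp_le)
qed

text \<open>Agents valuing the good above \<open>q\<close> contribute at most their budgets, the others at most \<open>q\<close> per unit.\<close>

lemma liquid_welfare_le_budget_above_plus:
  assumes "q \<ge> 0" "\<forall>j<n. y j \<ge> 0" "(\<Sum>j<n. y j) = 1"
  shows "liquid_welfare n B v y \<le> (\<Sum>j<n. if v j > q then B j else 0) + q"
proof -
  have "liquid_welfare n B v y \<le> (\<Sum>j<n. (if v j > q then B j else 0) + q * y j)"
    unfolding liquid_welfare_def
  proof (rule sum_mono)
    fix j assume "j \<in> {..<n}"
    then have "y j \<ge> 0" using assms by simp
    then have "q * y j \<ge> 0" "v j \<le> q \<Longrightarrow> v j * y j \<le> q * y j"
      using \<open>q \<ge> 0\<close> by (auto intro: mult_right_mono)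
    then show "min (v j * y j) (B j) \<le> (if v j > q then B j else 0) + q * y j"
      by (cases "v j > q") auto
  qed
  also have "\<dots> = (\<Sum>j<n. if v j > q then B j else 0) + q"
    using assms by (simp add: sum.distrib sum_distrib_left[symmetric])
  finally show ?thesis .
qed

lemma opt_liquid_welfare_le_budget_above_plus:
  assumes "n \<ge> 1" "q \<ge> 0"
  shows "opt_liquid_welfare n B v \<le> (\<Sum>j<n. if v j > q then B j else 0) + q"
  unfolding opt_liquid_welfare_def
proof (rule cSup_least)
  let ?y = "\<lambda>j::nat. if j = 0 then 1 else 0 :: real"
  have "(\<Sum>j<n. ?y j) = 1" using assms by (simp add: sum.delta)
  then have "liquid_welfare n B v ?y \<in> {liquid_welfare n B v x |x. (\<forall>i<n. x i \<ge> 0) \<and> (\<Sum>i<n. x i) = 1}"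
    by (intro CollectI exI[of _ ?y]) simp
  then show "{liquid_welfare n B v x |x. (\<forall>i<n. x i \<ge> 0) \<and> (\<Sum>i<n. x i) = 1} \<noteq> {}"
    by (metis empty_iff)
next
  fix z assume "z \<in> {liquid_welfare n B v x |x. (\<forall>i<n. x i \<ge> 0) \<and> (\<Sum>i<n. x i) = 1}"
  then show "z \<le> (\<Sum>j<n. if v j > q then B j else 0) + q"
    using liquid_welfare_le_budget_above_plus[OF \<open>q \<ge> 0\<close>] by blast
qed

lemma liquid_welfare_clearing_half_opt:
  assumes "n \<ge> 1" "clearing_alloc n B v x q" "\<forall>j<n. B j > 0" "\<forall>j<n. v j \<ge> 0"
  shows "liquid_welfare n B v x \<ge> opt_liquid_welfare n B v / 2"
proof -
  have "q > 0" using assms(2) by (simp add: clearing_alloc_def)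
  then show ?thesis
    using liquid_welfare_clearing_ge_price[OF assms(2,3)]
      liquid_welfare_clearing_ge_budget_above[OF assms(2-4)]
      opt_liquid_welfare_le_budget_above_plus[OF assms(1), of q B v]
    by linarith
qed

section \<open>Myerson payments for a monotone allocation rule\<close>

lemma mono_integrable_on_interval:
  fixes h :: "real \<Rightarrow> real"
  shows "mono h \<Longrightarrow> h integrable_on {a..b}"
  by (rule integrable_on_mono_on) (simp add: mono_on_def mono_def)

text \<open>Reporting \<open>b\<close> instead of the true value \<open>v\<close> changes the utility by an integral of \<open>h - h b\<close>
  over the interval between them, whose sign is fixed by monotonicity.\<close>

lemma myerson_truthful:
  fixes h :: "real \<Rightarrow> real"
  assumes h: "mono h" and "0 \<le> v" "0 \<le> b"
  shows "v * h b - (b * h b - integral {0..b} h) \<le> integral {0..v} h"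
proof (cases "b \<le> v")
  case True
  have "integral {b..v} (\<lambda>_. h b) \<le> integral {b..v} h"
    using monoD[OF h] by (intro integral_le integrable_const_ivl mono_integrable_on_interval[OF h]) auto
  moreover have "integral {0..b} h + integral {b..v} h = integral {0..v} h"
    using Henstock_Kurzweil_Integration.integral_combine[OF \<open>0 \<le> b\<close> True mono_integrable_on_interval[OF h]] .
  ultimately show ?thesis using True by (simp add: algebra_simps)
next
  case False
  have "integral {v..b} h \<le> integral {v..b} (\<lambda>_. h b)"
    using monoD[OF h] by (intro integral_le integrable_const_ivl mono_integrable_on_interval[OF h]) auto
  moreover have "integral {0..v} h + integral {v..b} h = integral {0..b} h"
    using False Henstock_Kurzweil_Integration.integral_combine[OF \<open>0 \<le> v\<close> _ mono_integrable_on_interval[OF h]] by simp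
  ultimately show ?thesis using False by (simp add: algebra_simps)
qed

lemma myerson_payment_le_const_above:
  fixes h :: "real \<Rightarrow> real"
  assumes h: "mono h" "\<And>u. 0 \<le> h u" and "0 \<le> q" "q < v" and const: "\<And>u. q < u \<Longrightarrow> h u = c"
  shows "v * c - integral {0..v} h \<le> q * c"
proof -
  have "integral {q..v} h = integral {q..v} (\<lambda>_. c)"
    using const by (intro integral_spike[of "{q}"]) auto
  moreover have "0 \<le> integral {0..q} h"
    using h(2) by (intro integral_nonneg mono_integrable_on_interval[OF h(1)])
  moreover have "integral {0..q} h + integral {q..v} h = integral {0..v} h"
    using assms by (intro Henstock_Kurzweil_Integration.integral_combine mono_integrable_on_interval[OF h(1)]) auto
  ultimately show ?thesis using \<open>q < v\<close> by (simp add: algebra_simps)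
qed

section \<open>Incentive compatibility and budget feasibility\<close>

lemma upa_alloc_clearing_valid:
  assumes "n \<ge> 1" "\<forall>j<n. B j > 0" "valid_profile n v"
  shows "clearing_alloc n B v (upa_alloc n B v) (upa_price n B v)"
proof (rule upa_alloc_clearing)
  show "\<forall>j<n. v j \<ge> 0" using assms by (auto simp: valid_profile_def less_imp_le)
  show "\<exists>j<n. v j > 0" using assms by (intro exI[of _ 0]) (auto simp: valid_profile_def)
qed (use assms in auto)

text \<open>Agent \<open>i\<close>'s allocation as a function of its own bid; cutting it off at \<open>0\<close> makes it
  monotone on all of \<open>\<real>\<close> without changing the integral in the Myerson payment.\<close>

definition upa_bid_alloc :: "nat \<Rightarrow> (nat \<Rightarrow> real) \<Rightarrow> (nat \<Rightarrow> real) \<Rightarrow> nat \<Rightarrow> real \<Rightarrow> real" where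
  "upa_bid_alloc n B v i u = (if u \<le> 0 then 0 else upa_alloc n B (v(i := u)) i)"

context
  fixes n :: nat and B v :: "nat \<Rightarrow> real" and i :: nat
  assumes n: "n \<ge> 1" and B_pos: "\<forall>j<n. B j > 0" and v: "valid_profile n v" and i: "i < n"
begin

lemma upa_clearing_at_bid:
  "u > 0 \<Longrightarrow> clearing_alloc n B (v(i := u)) (upa_alloc n B (v(i := u))) (upa_price n B (v(i := u)))"
  using v by (intro upa_alloc_clearing_valid[OF n B_pos]) (simp add: valid_profile_def)

lemma upa_bid_alloc_nonneg: "upa_bid_alloc n B v i u \<ge> 0"
  using upa_clearing_at_bid i by (simp add: upa_bid_alloc_def clearing_alloc_def)

lemma mono_upa_bid_alloc: "mono (upa_bid_alloc n B v i)"
proof (rule monoI)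
  fix a b :: real assume "a \<le> b"
  show "upa_bid_alloc n B v i a \<le> upa_bid_alloc n B v i b"
  proof (cases "a \<le> 0")
    case True then show ?thesis using upa_bid_alloc_nonneg by (simp add: upa_bid_alloc_def)
  next
    case False
    then show ?thesis
      using \<open>a \<le> b\<close> clearing_alloc_mono[OF B_pos i upa_clearing_at_bid upa_clearing_at_bid, of a b]
      by (cases "a = b") (auto simp: upa_bid_alloc_def)
  qed
qed

lemma upa_pay_bid:
  assumes "b > 0"
  shows "upa_pay n B (v(i := b)) i = b * upa_bid_alloc n B v i b - integral {0..b} (upa_bid_alloc n B v i)"
proof -
  have "integral {0..b} (\<lambda>u. upa_alloc n B (v(i := u)) i) = integral {0..b} (upa_bid_alloc n B v i)"
    by (rule integral_spike[of "{0}"]) (auto simp: upa_bid_alloc_def)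
  then show ?thesis using assms by (simp add: upa_pay_def upa_bid_alloc_def)
qed

lemma upa_pay_le_budget: "upa_pay n B v i \<le> B i"
proof -
  let ?h = "upa_bid_alloc n B v i" and ?p = "upa_price n B v"
  have "v i > 0" using v i by (simp add: valid_profile_def)
  have clear: "clearing_alloc n B v (upa_alloc n B v) ?p"
    using upa_alloc_clearing_valid[OF n B_pos v] .
  have h_v: "?h (v i) = upa_alloc n B v i" using \<open>v i > 0\<close> by (simp add: upa_bid_alloc_def)
  have pay: "upa_pay n B v i = v i * ?h (v i) - integral {0..v i} ?h"
    using upa_pay_bid[OF \<open>v i > 0\<close>] by simp
  show ?thesis
  proof (cases "v i > ?p")
    case True
    have "?p > 0" using clear by (simp add: clearing_alloc_def)
    have const: "?h u = B i / ?p" if "?p < u" for u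
    proof -
      have "clearing_alloc n B (v(i := v i)) (upa_alloc n B v) ?p" using clear by simp
      from clearing_price_unique_above(2)[OF B_pos i this upa_clearing_at_bid[of u]]
      have "upa_alloc n B (v(i := u)) i = B i / ?p" using True that \<open>?p > 0\<close> by simp
      then show ?thesis using that \<open>?p > 0\<close> by (simp add: upa_bid_alloc_def)
    qed
    have "v i * (B i / ?p) - integral {0..v i} ?h \<le> ?p * (B i / ?p)"
      by (rule myerson_payment_le_const_above[OF mono_upa_bid_alloc upa_bid_alloc_nonneg])
        (use True \<open>?p > 0\<close> const in auto)
    then show ?thesis using pay const[OF True] \<open>?p > 0\<close> by simp
  next
    case False
    have "v i * upa_alloc n B v i \<le> ?p * upa_alloc n B v i"
      using False clear i by (intro mult_right_mono) (auto simp: clearing_alloc_def)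
    also have "\<dots> \<le> B i" using clearing_alloc_spend_le[OF clear i] B_pos i by simp
    moreover have "0 \<le> integral {0..v i} ?h"
      using upa_bid_alloc_nonneg by (intro integral_nonneg mono_integrable_on_interval[OF mono_upa_bid_alloc])
    ultimately show ?thesis using pay h_v by simp
  qed
qed

lemma upa_truthful:
  assumes "b > 0"
  shows "upa_util n B v v i \<ge> upa_util n B v (v(i := b)) i"
proof -
  let ?h = "upa_bid_alloc n B v i"
  have "v i > 0" using v i by (simp add: valid_profile_def)
  have truthful: "upa_util n B v v i = ereal (integral {0..v i} ?h)"
    using upa_pay_le_budget upa_pay_bid[OF \<open>v i > 0\<close>] \<open>v i > 0\<close>
    by (simp add: upa_util_def upa_bid_alloc_def)
  have "upa_util n B v (v(i := b)) i \<le> ereal (v i * ?h b - upa_pay n B (v(i := b)) i)"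
    using assms by (simp add: upa_util_def upa_bid_alloc_def)
  also have "\<dots> \<le> ereal (integral {0..v i} ?h)"
    using myerson_truthful[OF mono_upa_bid_alloc, of "v i" b] upa_pay_bid[OF assms] \<open>v i > 0\<close> assms
    by simp
  finally show ?thesis using truthful by simp
qed

end

theorem mainTheorem8:
  fixes n :: nat and B :: "nat \<Rightarrow> real"
  assumes "n \<ge> 1"
    and "\<forall>i<n. B i > 0"
  shows "(\<forall>v i b. valid_profile n v \<and> i < n \<and> b > 0 \<longrightarrow>
            upa_util n B v v i \<ge> upa_util n B v (v(i := b)) i)
       \<and> (\<forall>v i. valid_profile n v \<and> i < n \<longrightarrow> upa_pay n B v i \<le> B i)
       \<and> (\<forall>v. valid_profile n v \<longrightarrow>
            liquid_welfare n B v (upa_alloc n B v) \<ge> opt_liquid_welfare n B v / 2)"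
proof -
  have "liquid_welfare n B v (upa_alloc n B v) \<ge> opt_liquid_welfare n B v / 2"
    if v: "valid_profile n v" for v
  proof (rule liquid_welfare_clearing_half_opt[OF assms(1) upa_alloc_clearing_valid[OF assms v] assms(2)])
    show "\<forall>j<n. v j \<ge> 0" using v by (auto simp: valid_profile_def less_imp_le)
  qed
  then show ?thesis using upa_truthful[OF assms] upa_pay_le_budget[OF assms] by blast
qed

end
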